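(* Let $u\in L_{\mathrm{up}}$ and $(\ell_1,\ell_2)\in A_u$. Then (a) $\mathrm{apex}(\ell_1)$ is a strict ancestor of $\mathrm{apex}(\ell_2)$ in $G$, and (b) $P_{u,\ell_1}$ is the edge set of a subpath of the $\mathrm{apex}(\ell_1)$-$\mathrm{apex}(\ell_2)$ path in $G$.
   Context: Let $(G=(V,E),L,w)$ be a WTAP instance (spanning tree $G$, links $L\subseteq\binom V2$, weights $w>0$) with a fixed root $r\in V$, and let $F\subseteq L$ be a WTAP solution, i.e. $\bigcup_{\ell\in F}P_\ell=E$, where $P_\ell$ is the edge set of the tree path between the endpoints of $\ell$ and $V_\ell$ its vertex set. Ancestors of $v$ are the vertices on the $r$-$v$ path in $G$ (including $r$ and $v$); strict ancestors exclude $v$; descendants are defined reciprocally. $\mathrm{apex}(\ell)$ is the vertex of $V_\ell$ closest to $r$. An up-link is a link $\{t,b\}$ with $t$ an ancestor of $b$; $L_{\mathrm{up}}$ is the set of up-links. For $v\in V$ let $B_v=\{\ell\in F\colon\mathrm{apex}(\ell)\text{ is a descendant of }v\}$. For an up-link $u=\{t,b\}$ with $t$ an ancestor of $b$, let $v_u$ be the ancestor of $t$ farthest from $r$ such that $P_u\subseteq\bigcup_{\ell\in B_{v_u}}P_\ell$, and fix $F_u\subseteq B_{v_u}$ inclusion-wise minimal with $P_u\subseteq\bigcup_{\ell\in F_u}P_\ell$. For $\ell\in F_u$ let $P_{u,\ell}=P_u\setminus\bigcup_{\bar\ell\in F_u\setminus\{\ell\}}P_{\bar\ell}$; these sets are nonempty,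 pairwise disjoint, and each is the edge set of a path. Define $\ell_1\prec_u\ell_2$ iff the edges of $P_{u,\ell_1}$ appear before those of $P_{u,\ell_2}$ on the $t$-$b$ path in $G$. If $\ell_1\prec_u\cdots\prec_u\ell_q$ are the links of $F_u$, let $A_u=\{(\ell_i,\ell_{i+1})\colon i=1,\dots,q-1\}$. *)

theory Defs
  imports Complex_Main
begin

text \<open>Graphs: vertices of type 'a, undirected edges and links are 2-element sets.
  A path is a nonempty list of distinct vertices, consecutive ones joined by edges.\<close>

definition is_path :: "'a set set \<Rightarrow> 'a list \<Rightarrow> 'a \<Rightarrow> 'a \<Rightarrow> bool" where
  "is_path E p x y \<longleftrightarrow> p \<noteq> [] \<and> hd p = x \<and> last p = y \<and> distinct p \<and>
     (\<forall>i. Suc i < length p \<longrightarrow> {p ! i, p ! Suc i} \<in> E)"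

definition path_edges :: "'a list \<Rightarrow> 'a set set" where
  "path_edges p = {{p ! i, p ! Suc i} | i. Suc i < length p}"

definition is_tree :: "'a set \<Rightarrow> 'a set set \<Rightarrow> bool" where
  "is_tree V E \<longleftrightarrow> finite V \<and> V \<noteq> {} \<and>
     E \<subseteq> {{x, y} | x y. x \<in> V \<and> y \<in> V \<and> x \<noteq> y} \<and>
     (\<forall>x\<in>V. \<forall>y\<in>V. \<exists>!p. is_path E p x y)"

definition tpath :: "'a set set \<Rightarrow> 'a \<Rightarrow> 'a \<Rightarrow> 'a list" where
  "tpath E x y = (THE p. is_path E p x y)"

definition is_link :: "'a set \<Rightarrow> 'a set \<Rightarrow> bool" where
  "is_link V l \<longleftrightarrow> (\<exists>x y. x \<in> V \<and> y \<in> V \<and> x \<noteq> y \<and> l = {x, y})"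

definition Pl :: "'a set set \<Rightarrow> 'a set \<Rightarrow> 'a set set" where
  "Pl E l = \<Union>{path_edges (tpath E x y) | x y. l = {x, y}}"

definition Vl :: "'a set set \<Rightarrow> 'a set \<Rightarrow> 'a set" where
  "Vl E l = \<Union>{set (tpath E x y) | x y. l = {x, y}}"

definition ancestor :: "'a set set \<Rightarrow> 'a \<Rightarrow> 'a \<Rightarrow> 'a \<Rightarrow> bool" where
  "ancestor E r a v \<longleftrightarrow> a \<in> set (tpath E r v)"

definition strict_ancestor :: "'a set set \<Rightarrow> 'a \<Rightarrow> 'a \<Rightarrow> 'a \<Rightarrow> bool" where
  "strict_ancestor E r a v \<longleftrightarrow> ancestor E r a v \<and> a \<noteq> v"

definition depth :: "'a set set \<Rightarrow> 'a \<Rightarrow> 'a \<Rightarrow> nat" where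
  "depth E r v = length (tpath E r v) - 1"

definition apex :: "'a set set \<Rightarrow> 'a \<Rightarrow> 'a set \<Rightarrow> 'a" where
  "apex E r l = (THE a. a \<in> Vl E l \<and> (\<forall>b\<in>Vl E l. depth E r a \<le> depth E r b))"

definition Bset :: "'a set set \<Rightarrow> 'a \<Rightarrow> 'a set set \<Rightarrow> 'a \<Rightarrow> 'a set set" where
  "Bset E r F v = {l \<in> F. ancestor E r v (apex E r l)}"

text \<open>v_u for the up-link u = {t,b} (t ancestor of b): the ancestor of t farthest
  from r such that P_u is covered by the links in B_{v_u}.\<close>
definition covers_at :: "'a set set \<Rightarrow> 'a \<Rightarrow> 'a set set \<Rightarrow> 'a set \<Rightarrow> 'a \<Rightarrow> bool" where
  "covers_at E r F u v \<longleftrightarrow> Pl E u \<subseteq> \<Union>(Pl E ` Bset E r F v)"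

definition vu :: "'a set set \<Rightarrow> 'a \<Rightarrow> 'a set set \<Rightarrow> 'a set \<Rightarrow> 'a \<Rightarrow> 'a" where
  "vu E r F u t = (THE v. ancestor E r v t \<and> covers_at E r F u v \<and>
      (\<forall>w. ancestor E r w t \<and> covers_at E r F u w \<longrightarrow> depth E r w \<le> depth E r v))"

definition Pul :: "'a set set \<Rightarrow> 'a set set \<Rightarrow> 'a set \<Rightarrow> 'a set \<Rightarrow> 'a set set" where
  "Pul E Fu u l = Pl E u - \<Union>(Pl E ` (Fu - {l}))"

definition prec_u :: "'a set set \<Rightarrow> 'a set set \<Rightarrow> 'a set \<Rightarrow> 'a \<Rightarrow> 'a \<Rightarrow> 'a set \<Rightarrow> 'a set \<Rightarrow> bool" where
  "prec_u E Fu u t b l1 l2 \<longleftrightarrow>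
     (let p = tpath E t b in
       \<forall>i j. Suc i < length p \<longrightarrow> Suc j < length p \<longrightarrow>
         {p ! i, p ! Suc i} \<in> Pul E Fu u l1 \<longrightarrow> {p ! j, p ! Suc j} \<in> Pul E Fu u l2 \<longrightarrow> i < j)"

definition Au :: "'a set set \<Rightarrow> 'a set set \<Rightarrow> 'a set \<Rightarrow> 'a \<Rightarrow> 'a \<Rightarrow> ('a set \<times> 'a set) set" where
  "Au E Fu u t b = {(ls ! i, ls ! Suc i) | ls i.
       distinct ls \<and> set ls = Fu \<and> sorted_wrt (prec_u E Fu u t b) ls \<and> Suc i < length ls}"

end

theory Submission
  imports Defs
begin

(* Everything happens on the root path Q of b, which contains the t-b path P_u.  Number the
   edges of Q by the depth of their upper endpoint, and let d z be the depth of the lowest common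
   ancestor of b and z.  A link {x, y} covers exactly the edges of Q with index in
   [min (d x) (d y), max (d x) (d y)), and if this interval is nonempty the apex of the link is
   the vertex of Q at its left end.  So F_u is a minimal cover of an interval of indices by
   intervals.  In such a cover each private part P_{u,l} is again an interval: a link whose
   interval met a gap of P_{u,l} would lie inside the interval of l and have no private part.
   If the private part of l1 precedes that of l2, it lies between the left ends of the
   intervals of l1 and l2, which gives both claims. *)

section \<open>Vertex lists and their edges\<close>

lemma path_edges_slice:
  "path_edges (drop a (take c p)) = (\<lambda>k. {p ! k, p ! Suc k}) ` {a..<min c (length p) - 1}"
proof (rule set_eqI)
  fix e
  show "e \<in> path_edges (drop a (take c p)) \<longleftrightarrow> e \<in> (\<lambda>k. {p ! k, p ! Suc k}) ` {a..<min c (length p) - 1}"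
  proof
    assume "e \<in> path_edges (drop a (take c p))"
    then obtain i where "Suc i < min c (length p) - a" "e = {p ! (a + i), p ! Suc (a + i)}"
      unfolding path_edges_def by (fastforce simp: less_diff_conv)
    then show "e \<in> (\<lambda>k. {p ! k, p ! Suc k}) ` {a..<min c (length p) - 1}"
      by (intro image_eqI[of _ _ "a + i"]) auto
  next
    assume "e \<in> (\<lambda>k. {p ! k, p ! Suc k}) ` {a..<min c (length p) - 1}"
    then obtain k where "a \<le> k" "Suc k < min c (length p)" "e = {p ! k, p ! Suc k}"
      by fastforce
    then show "e \<in> path_edges (drop a (take c p))"
      unfolding path_edges_def by (intro CollectI exI[of _ "k - a"]) (auto simp: Suc_diff_le)
  qed
qed

lemma path_edges_conv_image: "path_edges p = (\<lambda>k. {p ! k, p ! Suc k}) ` {..<length p - 1}"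
  using path_edges_slice[of 0 "length p" p] by (simp add: atLeast0LessThan)

lemma path_edges_drop: "path_edges (drop a p) = (\<lambda>k. {p ! k, p ! Suc k}) ` {a..<length p - 1}"
  using path_edges_slice[of a "length p" p] by simp

lemma in_set_drop_conv_nth: "v \<in> set (drop a p) \<longleftrightarrow> (\<exists>i. a \<le> i \<and> i < length p \<and> p ! i = v)"
proof
  assume "v \<in> set (drop a p)"
  then obtain k where "k < length p - a" "p ! (a + k) = v"
    by (auto simp: in_set_conv_nth)
  then show "\<exists>i. a \<le> i \<and> i < length p \<and> p ! i = v"
    by (intro exI[of _ "a + k"]) auto
next
  assume "\<exists>i. a \<le> i \<and> i < length p \<and> p ! i = v"
  then obtain i where "a \<le> i" "i < length p" "p ! i = v" by blast
  then show "v \<in> set (drop a p)"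
    unfolding in_set_conv_nth by (intro exI[of _ "i - a"]) auto
qed

lemma path_edges_Cons_Cons [simp]: "path_edges (a # b # p) = insert {a, b} (path_edges (b # p))"
  unfolding path_edges_conv_image by (auto simp: lessThan_Suc_eq_insert_0 image_image)

lemma path_edges_append_tl:
  assumes "p \<noteq> []" "q \<noteq> []" "last p = hd q"
  shows "path_edges (p @ tl q) = path_edges p \<union> path_edges q"
  using assms
proof (induction p rule: induct_list012)
  case (2 x)
  then show ?case by (cases q) (auto simp: path_edges_def)
next
  case (3 x y zs)
  then show ?case by auto
qed simp

lemma path_edges_rev [simp]: "path_edges (rev p) = path_edges p"
proof -
  have rev_sub: "path_edges (rev q) \<subseteq> path_edges q" for q :: "'b list"
  proof
    fix e assume "e \<in> path_edges (rev q)"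
    then obtain k where "k < length q - 1" "e = {rev q ! k, rev q ! Suc k}"
      unfolding path_edges_conv_image by auto
    then show "e \<in> path_edges q"
      unfolding path_edges_conv_image
      by (intro image_eqI[of _ _ "length q - 2 - k"]) (auto simp: rev_nth Suc_diff_Suc numeral_2_eq_2)
  qed
  show ?thesis using rev_sub[of p] rev_sub[of "rev p"] by simp
qed

lemma drop_take_split:
  assumes "a \<le> b" "b \<le> c"
  shows "drop a (take c p) = drop a (take b p) @ drop b (take c p)"
proof -
  have "take c p = take b p @ drop b (take c p)"
    using append_take_drop_id[of b "take c p"] assms(2) by (simp add: min.absorb1)
  then have "drop a (take c p) = drop a (take b p) @ drop (a - length (take b p)) (drop b (take c p))"
    by (metis drop_append)
  then show ?thesis
    using assms by (cases "a \<le> length p") simp_all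
qed

lemma slice_split_at_edge_interval:
  assumes "i \<le> \<alpha>" "\<alpha> < \<beta>" "\<beta> \<le> j" "j < length p"
  shows "\<exists>xs ys zs. drop i (take (Suc j) p) = xs @ ys @ zs \<and>
    path_edges ys = (\<lambda>k. {p ! k, p ! Suc k}) ` {\<alpha>..<\<beta>}"
proof (intro exI conjI)
  show "drop i (take (Suc j) p) =
      drop i (take \<alpha> p) @ drop \<alpha> (take (Suc \<beta>) p) @ drop (Suc \<beta>) (take (Suc j) p)"
    using assms drop_take_split[of i \<alpha> "Suc j" p] drop_take_split[of \<alpha> "Suc \<beta>" "Suc j" p] by simp
  show "path_edges (drop \<alpha> (take (Suc \<beta>) p)) = (\<lambda>k. {p ! k, p ! Suc k}) ` {\<alpha>..<\<beta>}"
    using assms unfolding path_edges_slice by simp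
qed

lemma is_path_iff:
  "is_path E p x y \<longleftrightarrow> p \<noteq> [] \<and> hd p = x \<and> last p = y \<and> distinct p \<and> path_edges p \<subseteq> E"
  unfolding is_path_def path_edges_def by blast

lemma is_path_rev: "is_path E p x y \<Longrightarrow> is_path E (rev p) y x"
  unfolding is_path_iff by (auto simp: hd_rev last_rev)

lemma is_path_slice:
  assumes "is_path E p x y" "i \<le> j" "j < length p"
  shows "is_path E (drop i (take (Suc j) p)) (p ! i) (p ! j)"
proof -
  have "path_edges (drop i (take (Suc j) p)) \<subseteq> path_edges p"
    unfolding path_edges_slice by (auto simp: path_edges_conv_image)
  with assms show ?thesis
    unfolding is_path_iff by (auto simp: hd_drop_conv_nth last_conv_nth distinct_drop)
qed

lemma is_path_drop:
  assumes "is_path E p x y" "i < length p"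
  shows "is_path E (drop i p) (p ! i) y"
proof -
  have "p ! (length p - 1) = y"
    using assms(1) unfolding is_path_def by (metis last_conv_nth)
  with is_path_slice[OF assms(1), of i "length p - 1"] assms(2) show ?thesis
    by simp
qed

lemma is_path_append_tl:
  assumes "is_path E p x y" "is_path E q y z" "set p \<inter> set q \<subseteq> {y}"
  shows "is_path E (p @ tl q) x z"
proof -
  obtain q' where q: "q = y # q'"
    using assms(2) unfolding is_path_iff by (cases q) auto
  then have "last (p @ tl q) = z"
    using assms unfolding is_path_iff by (cases "q' = []") auto
  with assms q path_edges_append_tl[of p q] show ?thesis
    unfolding is_path_iff by auto
qed

lemma is_path_subset_vertices:
  assumes "is_tree V E" "is_path E p x y" "x \<in> V"
  shows "set p \<subseteq> V"
proof
  fix v assume "v \<in> set p"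
  then obtain i where i: "i < length p" "v = p ! i"
    by (auto simp: in_set_conv_nth)
  show "v \<in> V"
  proof (cases i)
    case 0
    with assms(2,3) i show ?thesis unfolding is_path_def by (auto simp flip: hd_conv_nth)
  next
    case (Suc j)
    with assms(2) i have "{p ! j, v} \<in> E" unfolding is_path_def by auto
    with assms(1) show ?thesis unfolding is_tree_def by (auto simp: doubleton_eq_iff)
  qed
qed

section \<open>Paths in a rooted tree\<close>

lemma tpath_is_path:
  assumes "is_tree V E" "x \<in> V" "y \<in> V"
  shows "is_path E (tpath E x y) x y"
proof -
  have "\<exists>!p. is_path E p x y" using assms unfolding is_tree_def by blast
  then show ?thesis unfolding tpath_def by (rule theI')
qed

lemma tpath_eqI:
  assumes "is_tree V E" "x \<in> V" "y \<in> V" "is_path E p x y"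
  shows "tpath E x y = p"
proof -
  have "\<exists>!p. is_path E p x y" using assms unfolding is_tree_def by blast
  then show ?thesis unfolding tpath_def using assms(4) by (rule the1_equality)
qed

lemma tpath_rev:
  assumes "is_tree V E" "x \<in> V" "y \<in> V"
  shows "tpath E y x = rev (tpath E x y)"
  using assms by (intro tpath_eqI is_path_rev tpath_is_path)

lemma Pl_doubleton:
  assumes "is_tree V E" "x \<in> V" "y \<in> V"
  shows "Pl E {x, y} = path_edges (tpath E x y)"
proof -
  have "{path_edges (tpath E x' y') | x' y'. {x, y} = {x', y'}} =
      {path_edges (tpath E x y), path_edges (tpath E y x)}"
    by (auto simp: doubleton_eq_iff)
  then show ?thesis unfolding Pl_def using tpath_rev[OF assms] by simp
qed

lemma Vl_doubleton:
  assumes "is_tree V E" "x \<in> V" "y \<in> V"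
  shows "Vl E {x, y} = set (tpath E x y)"
proof -
  have "{set (tpath E x' y') | x' y'. {x, y} = {x', y'}} = {set (tpath E x y), set (tpath E y x)}"
    by (auto simp: doubleton_eq_iff)
  then show ?thesis unfolding Vl_def using tpath_rev[OF assms] by simp
qed

lemma apex_eqI:
  assumes "a \<in> Vl E l" "\<And>v. v \<in> Vl E l \<Longrightarrow> v \<noteq> a \<Longrightarrow> depth E r a < depth E r v"
  shows "apex E r l = a"
  unfolding apex_def
proof (rule the_equality)
  show "a \<in> Vl E l \<and> (\<forall>v\<in>Vl E l. depth E r a \<le> depth E r v)"
    using assms by (metis less_or_eq_imp_le)
next
  fix a' assume "a' \<in> Vl E l \<and> (\<forall>v\<in>Vl E l. depth E r a' \<le> depth E r v)"
  with assms show "a' = a" by (meson leD)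
qed

locale rooted_tree =
  fixes V :: "'a set" and E :: "'a set set" and r :: 'a
  assumes tree: "is_tree V E" and root: "r \<in> V"
begin

abbreviation rpath :: "'a \<Rightarrow> 'a list" where
  "rpath \<equiv> tpath E r"

lemma rpath_is_path: "v \<in> V \<Longrightarrow> is_path E (rpath v) r v"
  using tree root by (rule tpath_is_path)

lemma rpath_nonempty: "v \<in> V \<Longrightarrow> rpath v \<noteq> []"
  using rpath_is_path unfolding is_path_def by blast

lemma rpath_nth_0: "v \<in> V \<Longrightarrow> rpath v ! 0 = r"
  using rpath_is_path unfolding is_path_def by (metis hd_conv_nth)

lemma distinct_rpath: "v \<in> V \<Longrightarrow> distinct (rpath v)"
  using rpath_is_path unfolding is_path_def by blast

lemma set_rpath_subset: "v \<in> V \<Longrightarrow> set (rpath v) \<subseteq> V"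
  using is_path_subset_vertices[OF tree rpath_is_path root] .

lemma tpath_rpath_nth:
  assumes "v \<in> V" "i \<le> j" "j < length (rpath v)"
  shows "tpath E (rpath v ! i) (rpath v ! j) = drop i (take (Suc j) (rpath v))"
  using assms set_rpath_subset[OF assms(1)]
  by (intro tpath_eqI[OF tree] is_path_slice[OF rpath_is_path]) auto

lemma rpath_rpath_nth:
  assumes "v \<in> V" "i < length (rpath v)"
  shows "rpath (rpath v ! i) = take (Suc i) (rpath v)"
  using tpath_rpath_nth[of v 0 i] assms by (simp add: rpath_nth_0)

lemma depth_rpath_nth:
  assumes "v \<in> V" "i < length (rpath v)"
  shows "depth E r (rpath v ! i) = i"
  using assms unfolding depth_def by (simp add: rpath_rpath_nth)

lemma rpath_nth_eqD:
  assumes "x \<in> V" "y \<in> V" "i < length (rpath x)" "j < length (rpath y)"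
    and "rpath x ! i = rpath y ! j"
  shows "i = j" "take (Suc i) (rpath x) = take (Suc i) (rpath y)"
proof -
  show "i = j"
    using assms depth_rpath_nth by metis
  then show "take (Suc i) (rpath x) = take (Suc i) (rpath y)"
    using assms by (metis rpath_rpath_nth)
qed

lemma strict_ancestor_rpath_nth:
  assumes "v \<in> V" "i < j" "j < length (rpath v)"
  shows "strict_ancestor E r (rpath v ! i) (rpath v ! j)"
  using assms distinct_rpath[OF assms(1)]
  unfolding strict_ancestor_def ancestor_def
  by (auto simp: rpath_rpath_nth nth_eq_iff_index_eq in_set_conv_nth intro!: exI[of _ i])

lemma ancestor_tpath_eq_drop:
  assumes "b \<in> V" "ancestor E r t b"
  obtains dt where "dt < length (rpath b)" "tpath E t b = drop dt (rpath b)"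
proof -
  obtain dt where dt: "dt < length (rpath b)" "t = rpath b ! dt"
    using assms(2) unfolding ancestor_def by (auto simp: in_set_conv_nth)
  moreover have "t \<in> V"
    using assms set_rpath_subset unfolding ancestor_def by blast
  moreover have "is_path E (drop dt (rpath b)) t b"
    using is_path_drop[OF rpath_is_path[OF assms(1)] dt(1)] dt(2) by simp
  ultimately have "tpath E t b = drop dt (rpath b)"
    using assms(1) by (intro tpath_eqI[OF tree])
  with dt that show ?thesis by blast
qed

definition lca_depth :: "'a \<Rightarrow> 'a \<Rightarrow> nat" where
  "lca_depth x y = Max (depth E r ` (set (rpath x) \<inter> set (rpath y)))"

lemma lca_depth_commute: "lca_depth x y = lca_depth y x"
  unfolding lca_depth_def by (simp add: Int_commute)

lemma lca_depth_common_prefix: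
  assumes "x \<in> V" "y \<in> V"
  shows "lca_depth x y < length (rpath x)"
    and "take (Suc (lca_depth x y)) (rpath x) = take (Suc (lca_depth x y)) (rpath y)"
proof -
  have "r \<in> set (rpath x) \<inter> set (rpath y)"
    using assms by (metis IntI nth_mem length_greater_0_conv rpath_nonempty rpath_nth_0)
  then have "lca_depth x y \<in> depth E r ` (set (rpath x) \<inter> set (rpath y))"
    unfolding lca_depth_def by (intro Max_in) auto
  then obtain i j where ij: "i < length (rpath x)" "j < length (rpath y)"
    "rpath x ! i = rpath y ! j" "lca_depth x y = depth E r (rpath x ! i)"
    by (auto simp: in_set_conv_nth)
  then have "lca_depth x y = i"
    using assms depth_rpath_nth by metis
  with ij rpath_nth_eqD[OF assms ij(1-3)]
  show "lca_depth x y < length (rpath x)"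
    and "take (Suc (lca_depth x y)) (rpath x) = take (Suc (lca_depth x y)) (rpath y)"
    by simp_all
qed

lemma rpath_nth_lca:
  assumes "x \<in> V" "y \<in> V" "i \<le> lca_depth x y"
  shows "i < length (rpath y)" "rpath y ! i = rpath x ! i"
proof -
  note prefix = lca_depth_common_prefix[OF assms(1,2)]
  have "length (take (Suc (lca_depth x y)) (rpath y)) = Suc (lca_depth x y)"
    using prefix by (metis Suc_leI length_take min.absorb2)
  then show "i < length (rpath y)"
    using assms(3) by simp
  show "rpath y ! i = rpath x ! i"
    using prefix(2) assms(3) by (metis le_imp_less_Suc nth_take)
qed

lemma rpath_nth_in_rpath_iff:
  assumes "x \<in> V" "y \<in> V" "i < length (rpath x)"
  shows "rpath x ! i \<in> set (rpath y) \<longleftrightarrow> i \<le> lca_depth x y"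
proof
  assume "rpath x ! i \<in> set (rpath y)"
  then have "depth E r (rpath x ! i) \<in> depth E r ` (set (rpath x) \<inter> set (rpath y))"
    using assms(3) by auto
  then show "i \<le> lca_depth x y"
    unfolding lca_depth_def using assms by (simp add: depth_rpath_nth)
next
  assume "i \<le> lca_depth x y"
  then show "rpath x ! i \<in> set (rpath y)"
    using rpath_nth_lca[OF assms(1,2)] by (metis nth_mem)
qed

lemma lca_depth_ultrametric:
  assumes "x \<in> V" "y \<in> V" "z \<in> V"
  shows "min (lca_depth x y) (lca_depth y z) \<le> lca_depth x z"
proof -
  let ?m = "min (lca_depth x y) (lca_depth y z)"
  have "rpath x ! ?m = rpath z ! ?m" "?m < length (rpath z)"
    using rpath_nth_lca[OF assms(1,2), of ?m] rpath_nth_lca[OF assms(2,3), of ?m] by simp_all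
  moreover have "?m < length (rpath x)"
    using lca_depth_common_prefix(1)[OF assms(1,2)] by simp
  ultimately show ?thesis
    using rpath_nth_in_rpath_iff[OF assms(1,3)] by (metis nth_mem)
qed

lemma tpath_via_lca:
  assumes "x \<in> V" "y \<in> V"
  shows "tpath E x y = rev (drop (lca_depth x y) (rpath x)) @ tl (drop (lca_depth x y) (rpath y))"
proof -
  let ?d = "lca_depth x y"
  have d: "?d < length (rpath x)" "?d < length (rpath y)" "rpath y ! ?d = rpath x ! ?d"
    using lca_depth_common_prefix(1)[OF assms] rpath_nth_lca[OF assms, of ?d] by simp_all
  have "is_path E (rev (drop ?d (rpath x))) x (rpath x ! ?d)"
    using is_path_rev[OF is_path_drop[OF rpath_is_path[OF assms(1)] d(1)]] .
  moreover have "is_path E (drop ?d (rpath y)) (rpath x ! ?d) y"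
    using is_path_drop[OF rpath_is_path[OF assms(2)] d(2)] d(3) by simp
  moreover have "set (rev (drop ?d (rpath x))) \<inter> set (drop ?d (rpath y)) \<subseteq> {rpath x ! ?d}"
  proof
    fix v assume "v \<in> set (rev (drop ?d (rpath x))) \<inter> set (drop ?d (rpath y))"
    then obtain i j where ij: "?d \<le> i" "i < length (rpath x)" "rpath x ! i = v"
      "j < length (rpath y)" "rpath y ! j = v"
      unfolding set_rev Int_iff in_set_drop_conv_nth by blast
    then have "rpath x ! i \<in> set (rpath y)"
      by (metis nth_mem)
    then have "i = ?d"
      using ij(1,2) rpath_nth_in_rpath_iff[OF assms] by simp
    with ij show "v \<in> {rpath x ! ?d}"
      by simp
  qed
  ultimately show ?thesis
    using assms by (intro tpath_eqI[OF tree] is_path_append_tl)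
qed

lemma Pl_doubleton_lca:
  assumes "x \<in> V" "y \<in> V"
  shows "Pl E {x, y} =
    path_edges (drop (lca_depth x y) (rpath x)) \<union> path_edges (drop (lca_depth x y) (rpath y))"
proof -
  let ?d = "lca_depth x y"
  have d: "?d < length (rpath x)" "?d < length (rpath y)" "rpath y ! ?d = rpath x ! ?d"
    using lca_depth_common_prefix(1)[OF assms] rpath_nth_lca[OF assms, of ?d] by simp_all
  then have "last (rev (drop ?d (rpath x))) = hd (drop ?d (rpath y))"
    by (simp add: last_rev hd_drop_conv_nth)
  with d show ?thesis
    using Pl_doubleton[OF tree assms] tpath_via_lca[OF assms]
      path_edges_append_tl[of "rev (drop ?d (rpath x))" "drop ?d (rpath y)"]
    by simp
qed

lemma apex_doubleton_lca:
  assumes "x \<in> V" "y \<in> V"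
  shows "apex E r {x, y} = rpath x ! lca_depth x y"
proof (rule apex_eqI)
  let ?d = "lca_depth x y"
  have d: "?d < length (rpath x)" "?d < length (rpath y)" "rpath y ! ?d = rpath x ! ?d"
    using lca_depth_common_prefix(1)[OF assms] rpath_nth_lca[OF assms, of ?d] by simp_all
  have Vl: "Vl E {x, y} \<subseteq> set (drop ?d (rpath x)) \<union> set (drop ?d (rpath y))"
    unfolding Vl_doubleton[OF tree assms] tpath_via_lca[OF assms] using d(2)
    by (auto dest: list.set_sel(2)[rotated])
  have "rpath x ! ?d \<in> set (drop ?d (rpath x))"
    using d(1) unfolding in_set_drop_conv_nth by blast
  then show "rpath x ! ?d \<in> Vl E {x, y}"
    unfolding Vl_doubleton[OF tree assms] tpath_via_lca[OF assms] by simp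
  fix v assume v: "v \<in> Vl E {x, y}" "v \<noteq> rpath x ! ?d"
  with Vl obtain q where q: "q \<in> {x, y}" "v \<in> set (drop ?d (rpath q))"
    by blast
  then obtain i where i: "?d \<le> i" "i < length (rpath q)" "rpath q ! i = v"
    unfolding in_set_drop_conv_nth by blast
  have "q \<in> V" "rpath q ! ?d = rpath x ! ?d"
    using q(1) assms d(3) by auto
  with i v(2) have "?d < i"
    using le_neq_implies_less by metis
  then show "depth E r (rpath x ! ?d) < depth E r v"
    using depth_rpath_nth[OF \<open>q \<in> V\<close> i(2)] depth_rpath_nth[OF assms(1) d(1)] i(3) by simp
qed

lemma rpath_edge_in_drop_iff:
  assumes "b \<in> V" "x \<in> V" "Suc k < length (rpath b)"
  shows "{rpath b ! k, rpath b ! Suc k} \<in> path_edges (drop a (rpath x)) \<longleftrightarrow>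
    a \<le> k \<and> k < lca_depth b x"
proof
  assume "{rpath b ! k, rpath b ! Suc k} \<in> path_edges (drop a (rpath x))"
  then obtain i where i: "a \<le> i" "Suc i < length (rpath x)"
    "{rpath b ! k, rpath b ! Suc k} = {rpath x ! i, rpath x ! Suc i}"
    unfolding path_edges_drop by auto
  have "i = k \<and> rpath b ! Suc k = rpath x ! Suc i"
  proof (cases "rpath b ! k = rpath x ! i")
    case True
    then have "k = i"
      using rpath_nth_eqD(1)[OF assms(1,2)] assms(3) i(2) by simp
    with True i(3) show ?thesis
      by (auto simp: doubleton_eq_iff)
  next
    case False
    with i(3) have "rpath b ! k = rpath x ! Suc i" "rpath b ! Suc k = rpath x ! i"
      by (auto simp: doubleton_eq_iff)
    then have "k = Suc i" "Suc k = i"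
      using rpath_nth_eqD(1)[OF assms(1,2)] assms(3) i(2) by simp_all
    then show ?thesis by simp
  qed
  moreover have "rpath x ! Suc i \<in> set (rpath x)"
    using i(2) by simp
  ultimately have "Suc k \<le> lca_depth b x"
    using rpath_nth_in_rpath_iff[OF assms(1,2,3)] by simp
  with i(1) \<open>i = k \<and> _\<close> show "a \<le> k \<and> k < lca_depth b x"
    by simp
next
  assume k: "a \<le> k \<and> k < lca_depth b x"
  then have "Suc k < length (rpath x)" "rpath x ! k = rpath b ! k" "rpath x ! Suc k = rpath b ! Suc k"
    using rpath_nth_lca[OF assms(1,2), of k] rpath_nth_lca[OF assms(1,2), of "Suc k"] by simp_all
  with k show "{rpath b ! k, rpath b ! Suc k} \<in> path_edges (drop a (rpath x))"
    unfolding path_edges_drop by force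
qed

(* k < lca_depth b x says that x lies below rpath b ! Suc k. *)
lemma rpath_edge_in_Pl_iff:
  assumes "b \<in> V" "x \<in> V" "y \<in> V" "Suc k < length (rpath b)"
  shows "{rpath b ! k, rpath b ! Suc k} \<in> Pl E {x, y} \<longleftrightarrow>
    (k < lca_depth b x) \<noteq> (k < lca_depth b y)"
proof -
  have "min (lca_depth b x) (lca_depth b y) \<le> lca_depth x y"
    using lca_depth_ultrametric[OF assms(2,1,3)] lca_depth_commute[of x b] by simp
  moreover have "min (lca_depth b x) (lca_depth x y) \<le> lca_depth b y"
    using lca_depth_ultrametric[OF assms(1,2,3)] .
  moreover have "min (lca_depth b y) (lca_depth x y) \<le> lca_depth b x"
    using lca_depth_ultrametric[OF assms(1,3,2)] lca_depth_commute[of y x] by simp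
  ultimately show ?thesis
    unfolding Pl_doubleton_lca[OF assms(2,3)] Un_iff
      rpath_edge_in_drop_iff[OF assms(1,2,4)] rpath_edge_in_drop_iff[OF assms(1,3,4)]
    by linarith
qed

lemma apex_doubleton_rpath:
  assumes "b \<in> V" "x \<in> V" "y \<in> V" "lca_depth b y < lca_depth b x"
  shows "apex E r {x, y} = rpath b ! lca_depth b y"
proof -
  have "lca_depth x y = lca_depth b y"
    using lca_depth_ultrametric[OF assms(2,1,3)] lca_depth_commute[of x b]
      lca_depth_ultrametric[OF assms(1,2,3)] assms(4) by simp
  then show ?thesis
    using apex_doubleton_lca[OF assms(2,3)] rpath_nth_lca[OF assms(1,2), of "lca_depth b y"] assms(4)
    by simp
qed

lemma rpath_edge_in_Pl_link_iff:
  assumes "b \<in> V" "is_link V l" "Suc k < length (rpath b)"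
  shows "{rpath b ! k, rpath b ! Suc k} \<in> Pl E l \<longleftrightarrow>
    k \<in> {Min (lca_depth b ` l)..<Max (lca_depth b ` l)}"
proof -
  obtain x y where "x \<in> V" "y \<in> V" "l = {x, y}"
    using assms(2) unfolding is_link_def by blast
  then show ?thesis
    using rpath_edge_in_Pl_iff[OF assms(1) _ _ assms(3)] by auto
qed

lemma apex_link_on_rpath:
  assumes "b \<in> V" "is_link V l" "Min (lca_depth b ` l) < Max (lca_depth b ` l)"
  shows "apex E r l = rpath b ! Min (lca_depth b ` l)"
proof -
  obtain x y where xy: "x \<in> V" "y \<in> V" "l = {x, y}"
    using assms(2) unfolding is_link_def by blast
  with assms(3) consider "lca_depth b y < lca_depth b x" | "lca_depth b x < lca_depth b y"
    by fastforce
  then show ?thesis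
  proof cases
    case 1
    with xy show ?thesis
      using apex_doubleton_rpath[OF assms(1) xy(1,2)] by simp
  next
    case 2
    with xy show ?thesis
      using apex_doubleton_rpath[OF assms(1) xy(2,1)] by (simp add: insert_commute)
  qed
qed

end

section \<open>Minimal covers by intervals\<close>

(* private_part (Pl E) F_u (Pl E u) l is the set P_{u,l}. *)
definition private_part :: "('b \<Rightarrow> 'c set) \<Rightarrow> 'b set \<Rightarrow> 'c set \<Rightarrow> 'b \<Rightarrow> 'c set" where
  "private_part P G A l = A - \<Union>(P ` (G - {l}))"

lemma private_part_subset: "A \<subseteq> \<Union>(P ` G) \<Longrightarrow> l \<in> G \<Longrightarrow> private_part P G A l \<subseteq> P l"
  unfolding private_part_def by blast

lemma private_part_image:
  assumes "\<And>l k. l \<in> G \<Longrightarrow> k \<in> K \<Longrightarrow> e k \<in> P l \<longleftrightarrow> k \<in> I l"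
  shows "private_part P G (e ` K) l = e ` private_part I G K l"
  unfolding private_part_def using assms by blast

lemma private_part_interval:
  fixes lo hi :: "'b \<Rightarrow> nat"
  defines "I \<equiv> \<lambda>l. {lo l..<hi l}"
  assumes cover: "{p..<q} \<subseteq> \<Union>(I ` G)"
    and nonempty: "\<And>l. l \<in> G \<Longrightarrow> private_part I G {p..<q} l \<noteq> {}"
    and l: "l \<in> G"
  obtains \<alpha> \<beta> where "\<alpha> < \<beta>" "private_part I G {p..<q} l = {\<alpha>..<\<beta>}"
proof -
  let ?R = "private_part I G {p..<q}"
  have convex: "c \<in> ?R l" if "a \<in> ?R l" "b \<in> ?R l" "a \<le> c" "c \<le> b" for a b c
  proof (rule ccontr)
    assume c: "c \<notin> ?R l"
    have ab: "a \<in> I l" "b \<in> I l"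
      using that(1,2) private_part_subset[OF cover l] by blast+
    have "c \<in> {p..<q}"
      using that unfolding private_part_def by auto
    with c obtain l' where l': "l' \<in> G - {l}" "c \<in> I l'"
      unfolding private_part_def by blast
    then have "a \<notin> I l'" "b \<notin> I l'"
      using that(1,2) unfolding private_part_def by blast+
    with l' that(3,4) have "I l' \<subseteq> {a..b}"
      unfolding I_def by auto
    moreover have "{a..b} \<subseteq> I l"
      using ab unfolding I_def by auto
    ultimately have "?R l' \<subseteq> I l"
      using private_part_subset[OF cover] l' by blast
    moreover have "?R l' \<inter> I l = {}"
      using l l' unfolding private_part_def by blast
    ultimately show False
      using nonempty l' by blast
  qed
  have fin: "finite (?R l)"
    unfolding private_part_def by simp
  have ne: "?R l \<noteq> {}"
    using nonempty l by blast
  have "?R l = {Min (?R l)..<Suc (Max (?R l))}"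
    using convex[OF Min_in[OF fin ne] Max_in[OF fin ne]] Min_le[OF fin] Max_ge[OF fin]
    by (auto simp: less_Suc_eq_le)
  moreover have "Min (?R l) < Suc (Max (?R l))"
    using Min_le[OF fin Max_in[OF fin ne]] by simp
  ultimately show ?thesis
    using that by blast
qed

lemma private_part_before:
  fixes lo hi :: "'b \<Rightarrow> nat"
  defines "I \<equiv> \<lambda>l. {lo l..<hi l}"
  assumes cover: "K \<subseteq> \<Union>(I ` G)"
    and l12: "l1 \<in> G" "l2 \<in> G" "l1 \<noteq> l2"
    and k': "k' \<in> private_part I G K l2"
    and before: "\<And>k. k \<in> private_part I G K l1 \<Longrightarrow> k < k'"
  shows "private_part I G K l1 \<subseteq> {lo l1..<lo l2}"
proof
  fix k assume k: "k \<in> private_part I G K l1"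
  then have "k \<in> I l1" "k \<notin> I l2"
    using private_part_subset[OF cover l12(1)] l12 unfolding private_part_def by blast+
  moreover have "k' \<in> I l2"
    using private_part_subset[OF cover l12(2)] k' by blast
  ultimately show "k \<in> {lo l1..<lo l2}"
    using before[OF k] unfolding I_def by auto
qed

lemma consecutive_private_parts:
  fixes lo hi :: "'b \<Rightarrow> nat" and e :: "nat \<Rightarrow> 'c"
  assumes trace: "\<And>l k. l \<in> G \<Longrightarrow> k \<in> {p..<q} \<Longrightarrow> e k \<in> P l \<longleftrightarrow> k \<in> {lo l..<hi l}"
    and cover: "e ` {p..<q} \<subseteq> \<Union>(P ` G)"
    and nonempty: "\<And>l. l \<in> G \<Longrightarrow> private_part P G (e ` {p..<q}) l \<noteq> {}"
    and l12: "l1 \<in> G" "l2 \<in> G" "l1 \<noteq> l2"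
    and order: "\<And>k k'. k \<in> {p..<q} \<Longrightarrow> k' \<in> {p..<q} \<Longrightarrow>
      e k \<in> private_part P G (e ` {p..<q}) l1 \<Longrightarrow> e k' \<in> private_part P G (e ` {p..<q}) l2 \<Longrightarrow>
      k < k'"
  obtains \<alpha> \<beta> where "lo l1 \<le> \<alpha>" "\<alpha> < \<beta>" "\<beta> \<le> lo l2" "\<alpha> < hi l1" "lo l2 < hi l2" "lo l2 < q"
    "private_part P G (e ` {p..<q}) l1 = e ` {\<alpha>..<\<beta>}"
proof -
  define I where "I l = {lo l..<hi l}" for l
  let ?R = "private_part I G {p..<q}"
  have image: "private_part P G (e ` {p..<q}) l = e ` ?R l" for l
    using trace unfolding I_def by (rule private_part_image)
  have cov: "{p..<q} \<subseteq> \<Union>(I ` G)"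
  proof
    fix k assume k: "k \<in> {p..<q}"
    then obtain l where "l \<in> G" "e k \<in> P l"
      using cover by blast
    with k trace show "k \<in> \<Union>(I ` G)"
      unfolding I_def by blast
  qed
  have R_sub: "?R l \<subseteq> {p..<q}" for l
    unfolding private_part_def by blast
  have ne: "?R l \<noteq> {}" if "l \<in> G" for l
    using nonempty[OF that] image by auto
  obtain \<alpha> \<beta> where \<alpha>\<beta>: "\<alpha> < \<beta>" "?R l1 = {\<alpha>..<\<beta>}"
    using private_part_interval[of p q lo hi G l1] cov ne l12(1) unfolding I_def by blast
  obtain k' where k': "k' \<in> ?R l2"
    using ne l12(2) by blast
  have "k < k'" if "k \<in> ?R l1" for k
    using order[of k k'] that k' R_sub image by blast
  then have "?R l1 \<subseteq> {lo l1..<lo l2}"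
    using private_part_before[of "{p..<q}" lo hi G l1 l2 k'] cov l12 k' unfolding I_def by blast
  then have "lo l1 \<le> \<alpha>" "\<beta> \<le> lo l2"
    using \<alpha>\<beta> by auto
  moreover have "k' \<in> I l2"
    using private_part_subset[OF cov l12(2)] k' by blast
  moreover have "k' \<in> {p..<q}"
    using R_sub k' by blast
  moreover have "\<alpha> \<in> I l1"
    using private_part_subset[OF cov l12(1)] \<alpha>\<beta> by auto
  ultimately show ?thesis
    using that[of \<alpha> \<beta>] \<alpha>\<beta> image unfolding I_def by simp
qed

lemma Au_memD:
  assumes "(l1, l2) \<in> Au E Fu u t b"
  shows "l1 \<in> Fu" "l2 \<in> Fu" "l1 \<noteq> l2" "prec_u E Fu u t b l1 l2"
proof -
  obtain ls i where ls: "l1 = ls ! i" "l2 = ls ! Suc i" "distinct ls" "set ls = Fu"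
    "sorted_wrt (prec_u E Fu u t b) ls" "Suc i < length ls"
    using assms unfolding Au_def by blast
  then show "l1 \<in> Fu" "l2 \<in> Fu" "l1 \<noteq> l2"
    by (auto simp: nth_eq_iff_index_eq)
  show "prec_u E Fu u t b l1 l2"
    using ls by (simp add: sorted_wrt_nth_less)
qed

lemma prec_u_drop_index:
  assumes "tpath E t b = drop dt p" "prec_u E Fu u t b l1 l2"
    and "k \<in> {dt..<length p - 1}" "k' \<in> {dt..<length p - 1}"
    and "{p ! k, p ! Suc k} \<in> Pul E Fu u l1" "{p ! k', p ! Suc k'} \<in> Pul E Fu u l2"
  shows "k < k'"
proof -
  let ?p = "tpath E t b"
  have "Suc (k - dt) < length ?p" "{?p ! (k - dt), ?p ! Suc (k - dt)} = {p ! k, p ! Suc k}"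
    and "Suc (k' - dt) < length ?p" "{?p ! (k' - dt), ?p ! Suc (k' - dt)} = {p ! k', p ! Suc k'}"
    using assms(1,3,4) by auto
  moreover have "Suc (k - dt) < length ?p \<longrightarrow> Suc (k' - dt) < length ?p \<longrightarrow>
      {?p ! (k - dt), ?p ! Suc (k - dt)} \<in> Pul E Fu u l1 \<longrightarrow>
      {?p ! (k' - dt), ?p ! Suc (k' - dt)} \<in> Pul E Fu u l2 \<longrightarrow> k - dt < k' - dt"
    using assms(2) unfolding prec_u_def Let_def by blast
  ultimately have "k - dt < k' - dt"
    using assms(5,6) by simp
  then show ?thesis
    using assms(3,4) by simp
qed

lemma (in rooted_tree) consecutive_links_on_rpath:
  assumes bV: "b \<in> V" and tV: "t \<in> V" and up: "ancestor E r t b" and u: "u = {t, b}"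
    and links: "\<forall>l\<in>Fu. is_link V l"
    and cover: "Pl E u \<subseteq> \<Union>(Pl E ` Fu)"
    and minimal: "\<forall>F'. F' \<subset> Fu \<longrightarrow> \<not> Pl E u \<subseteq> \<Union>(Pl E ` F')"
    and pair: "(l1, l2) \<in> Au E Fu u t b"
  obtains i \<alpha> \<beta> j where "i \<le> \<alpha>" "\<alpha> < \<beta>" "\<beta> \<le> j" "j < length (rpath b)"
    "apex E r l1 = rpath b ! i" "apex E r l2 = rpath b ! j"
    "Pul E Fu u l1 = (\<lambda>k. {rpath b ! k, rpath b ! Suc k}) ` {\<alpha>..<\<beta>}"
proof -
  obtain dt where dt: "dt < length (rpath b)" "tpath E t b = drop dt (rpath b)"
    using ancestor_tpath_eq_drop[OF bV up] .
  define e where "e k = {rpath b ! k, rpath b ! Suc k}" for k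
  define lo hi where "lo l = Min (lca_depth b ` l)" and "hi l = Max (lca_depth b ` l)" for l
  have Pl_u: "Pl E u = e ` {dt..<length (rpath b) - 1}"
    unfolding u Pl_doubleton[OF tree tV bV] dt(2) path_edges_drop e_def ..
  have Pul: "Pul E Fu u = private_part (Pl E) Fu (Pl E u)"
    unfolding Pul_def private_part_def by blast
  note l12 = Au_memD[OF pair]
  obtain \<alpha> \<beta> where \<alpha>\<beta>: "lo l1 \<le> \<alpha>" "\<alpha> < \<beta>" "\<beta> \<le> lo l2" "\<alpha> < hi l1" "lo l2 < hi l2"
      "lo l2 < length (rpath b) - 1" "Pul E Fu u l1 = e ` {\<alpha>..<\<beta>}"
  proof (rule consecutive_private_parts[of Fu dt "length (rpath b) - 1" e "Pl E" lo hi l1 l2,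
        folded Pl_u Pul])
    show "e k \<in> Pl E l \<longleftrightarrow> k \<in> {lo l..<hi l}" if "l \<in> Fu" "k \<in> {dt..<length (rpath b) - 1}" for l k
      using rpath_edge_in_Pl_link_iff[OF bV, of l k] links that unfolding e_def lo_def hi_def by auto
    show "Pl E u \<subseteq> \<Union>(Pl E ` Fu)"
      by (rule cover)
    show "Pul E Fu u l \<noteq> {}" if "l \<in> Fu" for l
      using minimal[rule_format, of "Fu - {l}"] that unfolding Pul_def by blast
    show "l1 \<in> Fu" "l2 \<in> Fu" "l1 \<noteq> l2"
      by (rule l12)+
    show "k < k'" if "k \<in> {dt..<length (rpath b) - 1}" "k' \<in> {dt..<length (rpath b) - 1}"
      "e k \<in> Pul E Fu u l1" "e k' \<in> Pul E Fu u l2" for k k'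
      using prec_u_drop_index[OF dt(2) l12(4) that[unfolded e_def]] .
  qed
  moreover have "apex E r l1 = rpath b ! lo l1" "apex E r l2 = rpath b ! lo l2"
    using apex_link_on_rpath[OF bV] links l12 \<alpha>\<beta>(1,2,4,5) unfolding lo_def hi_def by auto
  ultimately show ?thesis
    using that[of "lo l1" \<alpha> \<beta> "lo l2"] unfolding e_def by simp
qed

theorem lemma8:
  fixes V :: "'a set" and E :: "'a set set" and L :: "'a set set" and w :: "'a set \<Rightarrow> real"
    and r :: 'a and F :: "'a set set" and u :: "'a set" and t b :: 'a
    and Fu :: "'a set set" and l1 l2 :: "'a set"
  assumes tree: "is_tree V E"
    and links: "\<forall>l\<in>L. is_link V l"
    and weights: "\<forall>l\<in>L. w l > 0"
    and root: "r \<in> V"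
    and F_sub: "F \<subseteq> L"
    and F_sol: "\<Union>(Pl E ` F) = E"
    and u_in: "u \<in> L" and u_eq: "u = {t, b}" and u_up: "ancestor E r t b"
    and Fu_sub: "Fu \<subseteq> Bset E r F (vu E r F u t)"
    and Fu_cov: "Pl E u \<subseteq> \<Union>(Pl E ` Fu)"
    and Fu_min: "\<forall>F'. F' \<subset> Fu \<longrightarrow> \<not> Pl E u \<subseteq> \<Union>(Pl E ` F')"
    and pair: "(l1, l2) \<in> Au E Fu u t b"
  shows "strict_ancestor E r (apex E r l1) (apex E r l2) \<and>
         (\<exists>xs ys zs. tpath E (apex E r l1) (apex E r l2) = xs @ ys @ zs \<and>
                     Pul E Fu u l1 = path_edges ys)"
proof -
  interpret rooted_tree V E r
    using tree root by unfold_locales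
  have tV: "t \<in> V" and bV: "b \<in> V"
    using links u_in u_eq unfolding is_link_def by (auto simp: doubleton_eq_iff)
  have Fu_links: "\<forall>l\<in>Fu. is_link V l"
    using Fu_sub F_sub links unfolding Bset_def by blast
  obtain i \<alpha> \<beta> j where ij: "i \<le> \<alpha>" "\<alpha> < \<beta>" "\<beta> \<le> j" "j < length (rpath b)"
    and apex: "apex E r l1 = rpath b ! i" "apex E r l2 = rpath b ! j"
    and Pul: "Pul E Fu u l1 = (\<lambda>k. {rpath b ! k, rpath b ! Suc k}) ` {\<alpha>..<\<beta>}"
    using consecutive_links_on_rpath[OF bV tV u_up u_eq Fu_links Fu_cov Fu_min pair] .
  have "i < j"
    using ij(1-3) by simp
  then have "strict_ancestor E r (rpath b ! i) (rpath b ! j)"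
    using strict_ancestor_rpath_nth[OF bV _ ij(4)] by simp
  moreover have "\<exists>xs ys zs. tpath E (rpath b ! i) (rpath b ! j) = xs @ ys @ zs \<and>
      Pul E Fu u l1 = path_edges ys"
    unfolding tpath_rpath_nth[OF bV less_imp_le[OF \<open>i < j\<close>] ij(4)] Pul
    using slice_split_at_edge_interval[OF ij] by force
  ultimately show ?thesis
    unfolding apex by blast
qed

end
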